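(* For each integer $s\ge 2$, $m(K_{1,1,1,s})=3$.
   Context: All graphs are finite, simple and undirected. A list assignment $L$ for a graph $G$ assigns to each vertex $v$ a set $L(v)$ of colors; an $L$-coloring is a proper vertex coloring $c$ of $G$ with $c(v)\in L(v)$ for every vertex $v$. A $k$-list assignment is a list assignment with $|L(v)|=k$ for all $v$. $G$ is uniquely $k$-list colorable (U$k$LC) if there exists a $k$-list assignment $L$ such that $G$ has exactly one $L$-coloring. $G$ has property $M(k)$ if it is not U$k$LC, i.e. for every $k$-list assignment $L$, $G$ has either no $L$-coloring or at least two $L$-colorings. The m-number $m(G)$ is the least integer $k\ge 1$ such that $G$ has property $M(k)$. $K_{n_1,\dots,n_r}$ denotes the complete $r$-partite graph with parts of sizes $n_1,\dots,n_r$. *)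

theory Defs
  imports "HOL-Library.FuncSet"
begin

text \<open>A graph is given by a finite vertex set V and a symmetric irreflexive
adjacency relation E. Colours are natural numbers (a countably infinite colour
supply; for finite graphs this loses no generality).\<close>

definition is_L_coloring :: "'a set \<Rightarrow> ('a \<Rightarrow> 'a \<Rightarrow> bool) \<Rightarrow> ('a \<Rightarrow> nat set) \<Rightarrow> ('a \<Rightarrow> nat) \<Rightarrow> bool" where
  "is_L_coloring V E L c \<longleftrightarrow>
     (\<forall>v\<in>V. c v \<in> L v) \<and> (\<forall>u\<in>V. \<forall>v\<in>V. E u v \<longrightarrow> c u \<noteq> c v)"

definition L_colorings :: "'a set \<Rightarrow> ('a \<Rightarrow> 'a \<Rightarrow> bool) \<Rightarrow> ('a \<Rightarrow> nat set) \<Rightarrow> ('a \<Rightarrow> nat) set" where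
  "L_colorings V E L = {c \<in> V \<rightarrow>\<^sub>E UNIV. is_L_coloring V E L c}"

definition is_k_list_assignment :: "'a set \<Rightarrow> nat \<Rightarrow> ('a \<Rightarrow> nat set) \<Rightarrow> bool" where
  "is_k_list_assignment V k L \<longleftrightarrow> (\<forall>v\<in>V. finite (L v) \<and> card (L v) = k)"

definition uniquely_k_list_colorable :: "'a set \<Rightarrow> ('a \<Rightarrow> 'a \<Rightarrow> bool) \<Rightarrow> nat \<Rightarrow> bool" where
  "uniquely_k_list_colorable V E k \<longleftrightarrow>
     (\<exists>L. is_k_list_assignment V k L \<and> (\<exists>!c. c \<in> L_colorings V E L))"

definition property_M :: "'a set \<Rightarrow> ('a \<Rightarrow> 'a \<Rightarrow> bool) \<Rightarrow> nat \<Rightarrow> bool" where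
  "property_M V E k \<longleftrightarrow> \<not> uniquely_k_list_colorable V E k"

definition m_number :: "'a set \<Rightarrow> ('a \<Rightarrow> 'a \<Rightarrow> bool) \<Rightarrow> nat" where
  "m_number V E = (LEAST k. k \<ge> 1 \<and> property_M V E k)"

text \<open>Complete multipartite graph K_{n_1,...,n_r}: vertices (i,j) with i < r,
j < n_i; two vertices are adjacent iff they lie in different parts.\<close>
definition cmp_vertices :: "nat list \<Rightarrow> (nat \<times> nat) set" where
  "cmp_vertices ns = {(i, j). i < length ns \<and> j < ns ! i}"

definition cmp_adj :: "(nat \<times> nat) \<Rightarrow> (nat \<times> nat) \<Rightarrow> bool" where
  "cmp_adj x y \<longleftrightarrow> fst x \<noteq> fst y"

end

theory Submission
  imports Defs
begin

text \<open>Every graph is uniquely 1-list colourable, and for s \<ge> 2 an explicit 2-list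
assignment of K_{1,1,1,s} has exactly one colouring. For 3-lists, suppose \<phi> were the unique
L-colouring and let S be the set of colours it uses on the triangle. Recolouring a single vertex
d of the independent part shows that L(d) - S = {\<phi>(d)}. A case analysis on the triangle
lists yields another proper triangle colouring whose colour set either equals S or contains
two colours outside S; in both cases no list L(d) is covered by it, so it extends to a
second L-colouring of the whole graph.\<close>

lemma L_coloringsI:
  assumes "c \<in> V \<rightarrow>\<^sub>E UNIV" and "\<And>v. v \<in> V \<Longrightarrow> c v \<in> L v"
    and "\<And>u v. u \<in> V \<Longrightarrow> v \<in> V \<Longrightarrow> E u v \<Longrightarrow> c u \<noteq> c v"
  shows "c \<in> L_colorings V E L"
  using assms unfolding L_colorings_def is_L_coloring_def by blast

lemma
  assumes "c \<in> L_colorings V E L"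
  shows L_coloring_in_list: "v \<in> V \<Longrightarrow> c v \<in> L v"
    and L_coloring_proper: "u \<in> V \<Longrightarrow> v \<in> V \<Longrightarrow> E u v \<Longrightarrow> c u \<noteq> c v"
    and L_coloring_extensional: "c \<in> V \<rightarrow>\<^sub>E UNIV"
  using assms unfolding L_colorings_def is_L_coloring_def by blast+

lemma L_colorings_eqI:
  assumes "c \<in> L_colorings V E L" "c' \<in> L_colorings V E L" "\<And>v. v \<in> V \<Longrightarrow> c v = c' v"
  shows "c = c'"
  using L_coloring_extensional[OF assms(1)] L_coloring_extensional[OF assms(2)] assms(3)
  by (rule PiE_ext)

lemma fun_upd_in_L_colorings:
  assumes c: "c \<in> L_colorings V E L" and "symp E" and v: "v \<in> V" "x \<in> L v"
    and free: "\<And>u. u \<in> V \<Longrightarrow> E u v \<Longrightarrow> c u \<noteq> x"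
  shows "c(v := x) \<in> L_colorings V E L"
proof (rule L_coloringsI)
  have "c(v := x) \<in> insert v V \<rightarrow>\<^sub>E UNIV"
    by (rule PiE_fun_upd) (simp_all add: L_coloring_extensional[OF c])
  then show "c(v := x) \<in> V \<rightarrow>\<^sub>E UNIV" by (simp add: insert_absorb[OF v(1)])
next
  fix u assume "u \<in> V"
  then show "(c(v := x)) u \<in> L u" using L_coloring_in_list[OF c] v(2) by simp
next
  fix u w assume u: "u \<in> V" and w: "w \<in> V" and uw: "E u w"
  have wu: "E w u" using \<open>symp E\<close> uw by (rule sympD)
  show "(c(v := x)) u \<noteq> (c(v := x)) w"
    using free[OF u] free[OF w] L_coloring_proper[OF c u w uw] uw wu by auto
qed

lemma unique_L_coloring_free_color:
  assumes c: "c \<in> L_colorings V E L" and unique: "\<And>c'. c' \<in> L_colorings V E L \<Longrightarrow> c' = c"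
    and "symp E" "v \<in> V" "x \<in> L v" "\<And>u. u \<in> V \<Longrightarrow> E u v \<Longrightarrow> c u \<noteq> x"
  shows "x = c v"
proof -
  have "c(v := x) = c" using unique fun_upd_in_L_colorings[OF c assms(3-6)] by blast
  then show ?thesis by (metis fun_upd_same)
qed

lemma not_property_M_if_unique_L_coloring:
  assumes "is_k_list_assignment V k L" "c \<in> L_colorings V E L"
    and "\<And>c'. c' \<in> L_colorings V E L \<Longrightarrow> c' = c"
  shows "\<not> property_M V E k"
  using assms unfolding property_M_def uniquely_k_list_colorable_def by blast

lemma not_property_M_1:
  fixes f :: "'a \<Rightarrow> nat"
  assumes "\<And>u v. u \<in> V \<Longrightarrow> v \<in> V \<Longrightarrow> E u v \<Longrightarrow> f u \<noteq> f v"
  shows "\<not> property_M V E 1"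
proof (rule not_property_M_if_unique_L_coloring)
  show "is_k_list_assignment V 1 (\<lambda>v. {f v})" unfolding is_k_list_assignment_def by simp
  show f: "restrict f V \<in> L_colorings V E (\<lambda>v. {f v})"
    by (rule L_coloringsI) (use assms in auto)
  show "c = restrict f V" if "c \<in> L_colorings V E (\<lambda>v. {f v})" for c
    by (rule L_colorings_eqI[OF that f]) (use L_coloring_in_list[OF that] in simp)
qed

lemma m_number_eqI:
  assumes "1 \<le> m" "property_M V E m" "\<And>k. 1 \<le> k \<Longrightarrow> k < m \<Longrightarrow> \<not> property_M V E k"
  shows "m_number V E = m"
  unfolding m_number_def
proof (rule Least_equality)
  show "1 \<le> m \<and> property_M V E m" using assms(1,2) ..
  show "m \<le> k" if "1 \<le> k \<and> property_M V E k" for k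
  proof (rule ccontr)
    assume "\<not> m \<le> k"
    then show False using that assms(3)[of k] by simp
  qed
qed

lemma eq_if_no_distinct_outside:
  assumes two: "2 \<le> card (X - S)" and outside: "\<And>x y. x \<in> X - S \<Longrightarrow> y \<in> Y - S \<Longrightarrow> x = y"
    and "finite S" "card S \<le> card Y"
  shows "Y = S"
proof -
  have "Y \<subseteq> S"
  proof
    fix y assume "y \<in> Y"
    show "y \<in> S"
    proof (rule ccontr)
      assume "y \<notin> S"
      then have "X - S \<subseteq> {y}" using outside \<open>y \<in> Y\<close> by blast
      then have "card (X - S) \<le> 1" using card_mono[of "{y}"] by simp
      then show False using two by simp
    qed
  qed
  then show ?thesis using card_seteq assms(3,4) by blast
qed

lemma another_distinct_representatives_permuting:
  assumes "\<alpha> \<in> A" "\<beta> \<in> B" "\<gamma> \<in> C" "distinct [\<alpha>, \<beta>, \<gamma>]"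
    and "\<beta> \<in> A \<or> \<gamma> \<in> A" "\<alpha> \<in> B \<or> \<gamma> \<in> B" "\<alpha> \<in> C \<or> \<beta> \<in> C"
  obtains p q r where "p \<in> A" "q \<in> B" "r \<in> C" "distinct [p, q, r]" "(p, q, r) \<noteq> (\<alpha>, \<beta>, \<gamma>)"
    "{p, q, r} = {\<alpha>, \<beta>, \<gamma>}"
  \<comment> \<open>Sending each of the three positions to one whose colour lies in its own list gives a
    fixed-point-free map; a 2-cycle of it is a swap, a 3-cycle a rotation of the colours.\<close>
  using that[of \<beta> \<alpha> \<gamma>] that[of \<gamma> \<beta> \<alpha>] that[of \<alpha> \<gamma> \<beta>] that[of \<beta> \<gamma> \<alpha>] that[of \<gamma> \<alpha> \<beta>] assms
  by (auto simp: insert_commute)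

lemma another_distinct_representatives_same_colours:
  fixes A B C :: "'a set"
  assumes card: "card A = 3" "card B = 3" "card C = 3"
    and mem: "\<alpha> \<in> A" "\<beta> \<in> B" "\<gamma> \<in> C" and dist: "distinct [\<alpha>, \<beta>, \<gamma>]"
    and outside: "\<forall>x\<in>A - {\<alpha>, \<beta>, \<gamma>}. \<forall>y\<in>B - {\<alpha>, \<beta>, \<gamma>}. x = y"
      "\<forall>x\<in>A - {\<alpha>, \<beta>, \<gamma>}. \<forall>y\<in>C - {\<alpha>, \<beta>, \<gamma>}. x = y"
      "\<forall>x\<in>B - {\<alpha>, \<beta>, \<gamma>}. \<forall>y\<in>C - {\<alpha>, \<beta>, \<gamma>}. x = y"
  obtains p q r where "p \<in> A" "q \<in> B" "r \<in> C" "distinct [p, q, r]" "(p, q, r) \<noteq> (\<alpha>, \<beta>, \<gamma>)"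
    "{p, q, r} = {\<alpha>, \<beta>, \<gamma>}"
proof -
  define S where "S = {\<alpha>, \<beta>, \<gamma>}"
  have S: "finite S" "card S \<le> 3" using dist unfolding S_def by auto
  have two_outside: "2 \<le> card (X - S)" if "card X = 3" "X \<inter> S = {\<delta>}" for X \<delta>
  proof -
    have "finite X" using that(1) by (simp add: card_ge_0_finite)
    then show ?thesis using that card_Diff_subset_Int[of X S] by simp
  qed
  note outside = outside[folded S_def]
  consider "\<beta> \<notin> A" "\<gamma> \<notin> A" | "\<alpha> \<notin> B" "\<gamma> \<notin> B" | "\<alpha> \<notin> C" "\<beta> \<notin> C"
    | "\<beta> \<in> A \<or> \<gamma> \<in> A" "\<alpha> \<in> B \<or> \<gamma> \<in> B" "\<alpha> \<in> C \<or> \<beta> \<in> C"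
    by blast
  then show thesis
  proof cases
    case 1
    then have "A \<inter> S = {\<alpha>}" using mem unfolding S_def by auto
    then have "2 \<le> card (A - S)" using two_outside card by blast
    then have "B = S" "C = S"
      by (rule eq_if_no_distinct_outside, use outside in metis, use S card in simp_all)+
    then show thesis using that[of \<alpha> \<gamma> \<beta>] mem dist unfolding S_def by auto
  next
    case 2
    then have "B \<inter> S = {\<beta>}" using mem unfolding S_def by auto
    then have "2 \<le> card (B - S)" using two_outside card by blast
    then have "A = S" "C = S"
      by (rule eq_if_no_distinct_outside, use outside in metis, use S card in simp_all)+
    then show thesis using that[of \<gamma> \<beta> \<alpha>] mem dist unfolding S_def by auto
  next
    case 3
    then have "C \<inter> S = {\<gamma>}" using mem unfolding S_def by auto
    then have "2 \<le> card (C - S)" using two_outside card by blast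
    then have "A = S" "B = S"
      by (rule eq_if_no_distinct_outside, use outside in metis, use S card in simp_all)+
    then show thesis using that[of \<beta> \<alpha> \<gamma>] mem dist unfolding S_def by auto
  next
    case 4
    with mem dist show thesis by (rule another_distinct_representatives_permuting) (rule that)
  qed
qed

lemma another_distinct_representatives:
  fixes A B C :: "'a set"
  assumes card: "card A = 3" "card B = 3" "card C = 3"
    and mem: "\<alpha> \<in> A" "\<beta> \<in> B" "\<gamma> \<in> C" and dist: "distinct [\<alpha>, \<beta>, \<gamma>]"
  obtains p q r where "p \<in> A" "q \<in> B" "r \<in> C" "distinct [p, q, r]" "(p, q, r) \<noteq> (\<alpha>, \<beta>, \<gamma>)"
    "{p, q, r} = {\<alpha>, \<beta>, \<gamma>} \<or> 2 \<le> card ({p, q, r} - {\<alpha>, \<beta>, \<gamma>})"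
proof -
  define S where "S = {\<alpha>, \<beta>, \<gamma>}"
  consider (AB) x y where "x \<in> A - S" "y \<in> B - S" "x \<noteq> y"
    | (AC) x y where "x \<in> A - S" "y \<in> C - S" "x \<noteq> y"
    | (BC) x y where "x \<in> B - S" "y \<in> C - S" "x \<noteq> y"
    | (none) "\<forall>x\<in>A - S. \<forall>y\<in>B - S. x = y" "\<forall>x\<in>A - S. \<forall>y\<in>C - S. x = y"
        "\<forall>x\<in>B - S. \<forall>y\<in>C - S. x = y"
    by blast
  then show thesis
  proof cases
    case AB
    then have "{x, y, \<gamma>} - S = {x, y}" unfolding S_def by auto
    then show thesis using that[of x y \<gamma>] AB mem unfolding S_def by auto
  next
    case AC
    then have "{x, \<beta>, y} - S = {x, y}" unfolding S_def by auto
    then show thesis using that[of x \<beta> y] AC mem unfolding S_def by auto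
  next
    case BC
    then have "{\<alpha>, x, y} - S = {x, y}" unfolding S_def by auto
    then show thesis using that[of \<alpha> x y] BC mem unfolding S_def by auto
  next
    case none
    obtain p q r where "p \<in> A" "q \<in> B" "r \<in> C" "distinct [p, q, r]"
      "(p, q, r) \<noteq> (\<alpha>, \<beta>, \<gamma>)" "{p, q, r} = S"
      using another_distinct_representatives_same_colours[OF assms none[unfolded S_def]]
      unfolding S_def by blast
    then show thesis using that[of p q r] unfolding S_def by blast
  qed
qed

lemma not_subset_if_single_outside:
  assumes "D - S = {d}" "finite T" "card T \<le> card D" "T = S \<or> 2 \<le> card (T - S)"
  shows "\<not> D \<subseteq> T"
proof
  assume sub: "D \<subseteq> T"
  from assms(4) show False
  proof
    assume "T = S"
    then show False using sub assms(1) by blast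
  next
    assume two: "2 \<le> card (T - S)"
    have "D = T" using card_seteq[OF assms(2) sub assms(3)] .
    then show False using two assms(1) by simp
  qed
qed

lemma symp_cmp_adj: "symp cmp_adj"
  by (auto simp: symp_def cmp_adj_def)

lemma not_property_M_cmp_1: "\<not> property_M (cmp_vertices ns) cmp_adj 1"
  by (rule not_property_M_1[of _ _ fst]) (simp add: cmp_adj_def)

lemma cmp_vertices_111s_apexI: "i \<in> {0, 1, 2} \<Longrightarrow> (i, 0) \<in> cmp_vertices [1, 1, 1, s]"
  unfolding cmp_vertices_def by auto

lemma cmp_vertices_111s_indepI: "j < s \<Longrightarrow> (3, j) \<in> cmp_vertices [1, 1, 1, s]"
  unfolding cmp_vertices_def by simp

lemma cmp_vertices_111s_cases:
  assumes "v \<in> cmp_vertices [1, 1, 1, s]"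
  obtains (apex) i where "i \<in> {0, 1, 2}" "v = (i, 0)" | (indep) j where "j < s" "v = (3, j)"
proof -
  obtain i j where v: "v = (i, j)" "i < 4" "j < [1, 1, 1, s] ! i"
    using assms unfolding cmp_vertices_def by auto
  then have "i \<in> {0, 1, 2, 3}" by auto
  then show thesis using v that by auto
qed

text \<open>The vertex (3,0) rules out the triangle colourings using both 1 and 4, and (3,1)
those using both 2 and 4; only the triangle colouring 1, 2, 3 remains, which forces colour 4
on the whole independent part.\<close>

definition K111s_2_lists :: "nat \<times> nat \<Rightarrow> nat set" where
  "K111s_2_lists v = (if v = (0, 0) then {1, 2} else if v = (1, 0) then {2, 3}
     else if v = (2, 0) then {3, 4} else if v = (3, 0) then {1, 4} else {2, 4})"

lemma K111s_2_lists_coloring_forced: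
  assumes "2 \<le> s" and c: "c \<in> L_colorings (cmp_vertices [1, 1, 1, s]) cmp_adj K111s_2_lists"
    and v: "v \<in> cmp_vertices [1, 1, 1, s]"
  shows "c v = (if fst v = 3 then 4 else fst v + 1)"
proof -
  let ?V = "cmp_vertices [1, 1, 1, s]"
  have apex: "(0, 0) \<in> ?V" "(1, 0) \<in> ?V" "(2, 0) \<in> ?V"
    by (rule cmp_vertices_111s_apexI; simp)+
  have indep: "(3, 0) \<in> ?V" "(3, 1) \<in> ?V"
    by (rule cmp_vertices_111s_indepI; use assms in simp)+
  note list = L_coloring_in_list[OF c, unfolded K111s_2_lists_def]
    and proper = L_coloring_proper[OF c, unfolded cmp_adj_def]
  have forced: "c (0, 0) = 1" "c (1, 0) = 2" "c (2, 0) = 3" "c (3, 0) = 4"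
    using list[OF apex(1)] list[OF apex(2)] list[OF apex(3)] list[OF indep(1)] list[OF indep(2)]
      proper[OF apex(1) apex(2)] proper[OF apex(1) apex(3)] proper[OF apex(2) apex(3)]
      proper[OF apex(1) indep(1)] proper[OF apex(2) indep(1)] proper[OF apex(3) indep(1)]
      proper[OF apex(1) indep(2)] proper[OF apex(2) indep(2)] proper[OF apex(3) indep(2)]
    by auto
  from v show ?thesis
  proof (cases rule: cmp_vertices_111s_cases)
    case (apex i)
    then show ?thesis using forced by auto
  next
    case (indep j)
    have "c (3, j) \<in> K111s_2_lists (3, j)" "c (3, j) \<noteq> c (1, 0)"
      using L_coloring_in_list[OF c v] proper[OF v apex(2)] indep by auto
    then show ?thesis using indep forced by (cases "j = 0") (auto simp: K111s_2_lists_def)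
  qed
qed

lemma not_property_M_K111s_2:
  assumes "2 \<le> s"
  shows "\<not> property_M (cmp_vertices [1, 1, 1, s]) cmp_adj 2"
proof (rule not_property_M_if_unique_L_coloring)
  let ?V = "cmp_vertices [1, 1, 1, s]"
  let ?c = "restrict (\<lambda>v. if fst v = 3 then 4 else fst v + 1) ?V"
  show "is_k_list_assignment ?V 2 K111s_2_lists"
    unfolding is_k_list_assignment_def K111s_2_lists_def by simp
  have c_eq: "?c v = (if fst v = 3 then 4 else fst v + 1)" if "v \<in> ?V" for v
    using that by simp
  show c: "?c \<in> L_colorings ?V cmp_adj K111s_2_lists"
  proof (rule L_coloringsI)
    show "?c \<in> ?V \<rightarrow>\<^sub>E UNIV" by simp
    show "?c v \<in> K111s_2_lists v" if "v \<in> ?V" for v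
      using that c_eq[OF that] by (cases rule: cmp_vertices_111s_cases) (auto simp: K111s_2_lists_def)
    show "?c u \<noteq> ?c v" if "u \<in> ?V" "v \<in> ?V" "cmp_adj u v" for u v
      using that by (auto simp: c_eq cmp_adj_def)
  qed
  show "c' = ?c" if "c' \<in> L_colorings ?V cmp_adj K111s_2_lists" for c'
    using L_colorings_eqI[OF that c] K111s_2_lists_coloring_forced[OF assms that] by simp
qed

lemma K111s_L_coloring_extension:
  fixes L :: "nat \<times> nat \<Rightarrow> nat set"
  assumes "p \<in> L (0, 0)" "q \<in> L (1, 0)" "r \<in> L (2, 0)" "distinct [p, q, r]"
    and indep_free: "\<And>j. j < s \<Longrightarrow> \<not> L (3, j) \<subseteq> {p, q, r}"
  obtains c where "c \<in> L_colorings (cmp_vertices [1, 1, 1, s]) cmp_adj L"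
    "c (0, 0) = p" "c (1, 0) = q" "c (2, 0) = r"
proof -
  let ?V = "cmp_vertices [1, 1, 1, s]"
  define c where "c = restrict (\<lambda>v. if fst v = 3 then SOME x. x \<in> L v - {p, q, r}
    else [p, q, r] ! fst v) ?V"
  have c_apex: "c (i, 0) = [p, q, r] ! i" "c (i, 0) \<in> L (i, 0)" "c (i, 0) \<in> {p, q, r}"
    if "i \<in> {0, 1, 2}" for i
    using that cmp_vertices_111s_apexI[OF that] assms(1-3) by (auto simp: c_def)
  have c_indep: "c (3, j) \<in> L (3, j) - {p, q, r}" if "j < s" for j
  proof -
    have "\<exists>x. x \<in> L (3, j) - {p, q, r}" using indep_free[OF that] by blast
    moreover have "c (3, j) = (SOME x. x \<in> L (3, j) - {p, q, r})"
      using cmp_vertices_111s_indepI[OF that] by (simp add: c_def)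
    ultimately show ?thesis using someI_ex by metis
  qed
  have c_part: "(\<exists>i\<in>{0, 1, 2}. v = (i, 0) \<and> c v = [p, q, r] ! i \<and> c v \<in> {p, q, r})
      \<or> (fst v = 3 \<and> c v \<notin> {p, q, r})" if "v \<in> ?V" for v
    using that by (cases rule: cmp_vertices_111s_cases) (use c_apex c_indep in auto)
  have "c \<in> L_colorings ?V cmp_adj L"
  proof (rule L_coloringsI)
    show "c \<in> ?V \<rightarrow>\<^sub>E UNIV" by (simp add: c_def)
    show "c v \<in> L v" if "v \<in> ?V" for v
      using that by (cases rule: cmp_vertices_111s_cases) (use c_apex c_indep in auto)
    show "c u \<noteq> c v" if "u \<in> ?V" "v \<in> ?V" "cmp_adj u v" for u v
      using c_part[OF that(1)] c_part[OF that(2)] that(3) assms(4)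
      by (auto simp: cmp_adj_def nth_eq_iff_index_eq)
  qed
  moreover have "c (0, 0) = p" "c (1, 0) = q" "c (2, 0) = r" using c_apex(1) by simp_all
  ultimately show thesis using that by blast
qed

lemma K111s_unique_L_coloring_indep:
  assumes \<phi>: "\<phi> \<in> L_colorings (cmp_vertices [1, 1, 1, s]) cmp_adj L"
    and unique: "\<And>c. c \<in> L_colorings (cmp_vertices [1, 1, 1, s]) cmp_adj L \<Longrightarrow> c = \<phi>"
    and "j < s"
  shows "L (3, j) - {\<phi> (0, 0), \<phi> (1, 0), \<phi> (2, 0)} = {\<phi> (3, j)}"
proof -
  let ?V = "cmp_vertices [1, 1, 1, s]"
  define S where "S = {\<phi> (0, 0), \<phi> (1, 0), \<phi> (2, 0)}"
  have v: "(3, j) \<in> ?V" using \<open>j < s\<close> by (rule cmp_vertices_111s_indepI)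
  have neighbour_in_S: "\<phi> u \<in> S" if "u \<in> ?V" "cmp_adj u (3, j)" for u
    using that(1) by (cases rule: cmp_vertices_111s_cases)
      (use that(2) in \<open>auto simp: cmp_adj_def S_def\<close>)
  have "\<phi> (3, j) \<in> L (3, j)" using L_coloring_in_list[OF \<phi> v] .
  moreover have "\<phi> (3, j) \<notin> S"
  proof -
    have "\<phi> (i, 0) \<noteq> \<phi> (3, j)" if "i \<in> {0, 1, 2}" for i
      using L_coloring_proper[OF \<phi> cmp_vertices_111s_apexI[OF that] v] that
      by (auto simp: cmp_adj_def)
    from this[of 0] this[of 1] this[of 2] show ?thesis unfolding S_def by auto
  qed
  moreover have "x = \<phi> (3, j)" if "x \<in> L (3, j) - S" for x
    using unique_L_coloring_free_color[OF \<phi> unique symp_cmp_adj v] that neighbour_in_S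
    by blast
  ultimately have "L (3, j) - S = {\<phi> (3, j)}" by blast
  then show ?thesis unfolding S_def .
qed

lemma property_M_K111s_3: "property_M (cmp_vertices [1, 1, 1, s]) cmp_adj 3"
  unfolding property_M_def uniquely_k_list_colorable_def
proof
  let ?V = "cmp_vertices [1, 1, 1, s]"
  assume "\<exists>L. is_k_list_assignment ?V 3 L \<and> (\<exists>!c. c \<in> L_colorings ?V cmp_adj L)"
  then obtain L \<phi> where lists: "is_k_list_assignment ?V 3 L"
    and \<phi>: "\<phi> \<in> L_colorings ?V cmp_adj L"
    and unique: "\<And>c. c \<in> L_colorings ?V cmp_adj L \<Longrightarrow> c = \<phi>"
    by blast
  define S where "S = {\<phi> (0, 0), \<phi> (1, 0), \<phi> (2, 0)}"
  have apex: "(i, 0) \<in> ?V" if "i \<in> {0, 1, 2}" for i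
    using that by (rule cmp_vertices_111s_apexI)
  have card_L: "card (L v) = 3" if "v \<in> ?V" for v
    using lists that unfolding is_k_list_assignment_def by blast
  have indep_outside_S: "L (3, j) - S = {\<phi> (3, j)}" if "j < s" for j
    using K111s_unique_L_coloring_indep[OF \<phi> unique that] unfolding S_def .
  have apex_distinct: "\<phi> (i, 0) \<noteq> \<phi> (i', 0)" if "i \<in> {0, 1, 2}" "i' \<in> {0, 1, 2}" "i \<noteq> i'" for i i'
    using L_coloring_proper[OF \<phi> apex[OF that(1)] apex[OF that(2)]] that(3) by (simp add: cmp_adj_def)
  have card_apex: "card (L (0, 0)) = 3" "card (L (1, 0)) = 3" "card (L (2, 0)) = 3"
    by (rule card_L, rule apex, simp)+
  have colour_apex: "\<phi> (0, 0) \<in> L (0, 0)" "\<phi> (1, 0) \<in> L (1, 0)" "\<phi> (2, 0) \<in> L (2, 0)"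
    by (rule L_coloring_in_list[OF \<phi>], rule apex, simp)+
  have "distinct [\<phi> (0, 0), \<phi> (1, 0), \<phi> (2, 0)]" by (simp add: apex_distinct)
  then obtain p q r where pqr: "p \<in> L (0, 0)" "q \<in> L (1, 0)" "r \<in> L (2, 0)" "distinct [p, q, r]"
    and new: "(p, q, r) \<noteq> (\<phi> (0, 0), \<phi> (1, 0), \<phi> (2, 0))"
    and colours: "{p, q, r} = S \<or> 2 \<le> card ({p, q, r} - S)"
    using another_distinct_representatives[OF card_apex colour_apex] unfolding S_def by blast
  have "\<not> L (3, j) \<subseteq> {p, q, r}" if "j < s" for j
  proof (rule not_subset_if_single_outside[OF indep_outside_S[OF that] _ _ colours])
    show "card {p, q, r} \<le> card (L (3, j))"
      using card_L[OF cmp_vertices_111s_indepI[OF that]] pqr(4) by simp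
  qed simp
  then obtain c where c: "c \<in> L_colorings ?V cmp_adj L" "c (0, 0) = p" "c (1, 0) = q" "c (2, 0) = r"
    using K111s_L_coloring_extension[OF pqr] by blast
  then show False using unique[OF c(1)] new by simp
qed

theorem proposition3p6:
  fixes s :: nat
  assumes "s \<ge> 2"
  shows "m_number (cmp_vertices [1, 1, 1, s]) cmp_adj = 3"
proof (rule m_number_eqI)
  show "property_M (cmp_vertices [1, 1, 1, s]) cmp_adj 3" by (rule property_M_K111s_3)
  show "\<not> property_M (cmp_vertices [1, 1, 1, s]) cmp_adj k" if "1 \<le> k" "k < 3" for k
  proof -
    have "k = 1 \<or> k = 2" using that by auto
    then show ?thesis using not_property_M_cmp_1 not_property_M_K111s_2[OF assms] by auto
  qed
qed simp

end
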